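(* For all fixed probability distributions $P\neq Q$ on $\mathbb{R}$ there exists a constant $c>0$ (depending on $P,Q$) such that if $k_n\in\{2,\dots,n\}$ satisfies $k_n\ge c\log n$ for all large $n$, then the optimal risk satisfies $R(T^* )\to 0$ as $n\to\infty$.
   Context: Weighted hidden clique model. For $n\ge 2$ and $k\in\{2,\dots,n\}$, let $E=\{(i,j):1\le i<j\le n\}$ and for $S\subseteq[n]$ let $E(S)=\{(i,j):i,j\in S,\ i<j\}$. The observation is $\mathbf{X}=(X_e)_{e\in E}$. Under $\mathcal{H}_0$ (law $\mathbb{P}_0$) the $X_e$ are i.i.d. $P$. Under $\mathcal{H}_1$ (law $\mathbb{P}_1$) a uniformly random $k$-subset $S^*\subseteq[n]$ is chosen and, conditionally on $S^*$, the $X_e$ are independent with $X_e\sim Q$ for $e\in E(S^* )$ and $X_e\sim P$ otherwise. The risk of a test $T:\mathbb{R}^{\binom n2}\to\{0,1\}$ is $R(T)=\mathbb{P}_0(T=1)+\mathbb{P}_1(T=0)$, and $R(T^* )=\inf_T R(T)$ is the optimal risk. *)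

theory Defs
  imports "HOL-Probability.Probability"
begin

definition edges :: "nat \<Rightarrow> (nat \<times> nat) set" where
  "edges n = {(i, j). 1 \<le> i \<and> i < j \<and> j \<le> n}"

definition edges_in :: "nat set \<Rightarrow> (nat \<times> nat) set" where
  "edges_in S = {(i, j). i \<in> S \<and> j \<in> S \<and> i < j}"

definition obs_space :: "nat \<Rightarrow> ((nat \<times> nat) \<Rightarrow> real) measure" where
  "obs_space n = PiM (edges n) (\<lambda>_. borel)"

definition null_law :: "nat \<Rightarrow> real measure \<Rightarrow> ((nat \<times> nat) \<Rightarrow> real) measure" where
  "null_law n P = PiM (edges n) (\<lambda>_. P)"

definition planted_law ::
  "nat \<Rightarrow> real measure \<Rightarrow> real measure \<Rightarrow> nat set \<Rightarrow> ((nat \<times> nat) \<Rightarrow> real) measure" where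
  "planted_law n P Q S = PiM (edges n) (\<lambda>e. if e \<in> edges_in S then Q else P)"

definition ksubsets :: "nat \<Rightarrow> nat \<Rightarrow> nat set set" where
  "ksubsets n k = {S. S \<subseteq> {1..n} \<and> card S = k}"

definition alt_prob ::
  "nat \<Rightarrow> nat \<Rightarrow> real measure \<Rightarrow> real measure \<Rightarrow> ((nat \<times> nat) \<Rightarrow> real) set \<Rightarrow> real" where
  "alt_prob n k P Q A =
     (\<Sum>S\<in>ksubsets n k. measure (planted_law n P Q S) A) / real (card (ksubsets n k))"

text \<open>Optimal risk: infimum over (measurable) tests T = indicator of the rejection
  region A of P_0(T=1) + P_1(T=0).\<close>
definition optimal_risk :: "nat \<Rightarrow> nat \<Rightarrow> real measure \<Rightarrow> real measure \<Rightarrow> real" where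
  "optimal_risk n k P Q =
     (INF A \<in> sets (obs_space n).
        measure (null_law n P) A + alt_prob n k P Q (space (obs_space n) - A))"

end

theory Submission
  imports Defs
begin

text \<open>Since P and Q differ, some Borel set B has p = P(B) < Q(B) = q; let \<delta> = (q - p)/2. The scan
  test rejects when some k-subset S has at least (p + q)/2 * (k choose 2) of its edge weights in B.
  For a fixed S this count is a sum of k choose 2 independent indicators, with mean p under the null
  and mean q on the planted clique, so by Hoeffding's inequality either error has probability at
  most exp(-\<delta>^2 k (k - 1)). A union bound over the n choose k \<le> n^k subsets bounds the risk by
  2 exp(k ln n - \<delta>^2 k (k - 1)), which is at most 2/n once k \<ge> (4/\<delta>^2) ln n.\<close>

definition hits :: "'a set \<Rightarrow> 'i set \<Rightarrow> ('i \<Rightarrow> 'a) \<Rightarrow> real" where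
  "hits B J x = (\<Sum>i\<in>J. indicator B (x i))"

lemma borel_measurable_hits [measurable]:
  assumes "J \<subseteq> I" and "\<And>i. i \<in> J \<Longrightarrow> B \<in> sets (M i)"
  shows "hits B J \<in> borel_measurable (PiM I M)"
  unfolding hits_def using assms by (intro borel_measurable_sum) auto

lemma (in product_prob_space) indep_vars_PiM_coordinates:
  assumes "finite J" and "J \<subseteq> I" and "J \<noteq> {}"
  shows "prob_space.indep_vars (PiM I M) M (\<lambda>i x. x i) J"
proof -
  have "distr (PiM I M) (PiM J M) (\<lambda>x. restrict x J)
      = PiM J (\<lambda>i. distr (PiM I M) (M i) (\<lambda>x. x i))"
    using assms distr_PiM_restrict_finite distr_PiM_component[of I M] prob_space
    by (auto intro!: PiM_cong)
  then show ?thesis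
    using assms by (subst P.indep_vars_iff_distr_eq_PiM') auto
qed

lemma (in product_prob_space) hits_Hoeffding:
  assumes "finite J" and "J \<subseteq> I" and "J \<noteq> {}"
    and B: "\<And>i. i \<in> J \<Longrightarrow> B \<in> sets (M i)" and r: "\<And>i. i \<in> J \<Longrightarrow> measure (M i) B = r"
    and "0 \<le> \<epsilon>"
  shows hits_Hoeffding_ge: "measure (PiM I M) {x \<in> space (PiM I M). (r + \<epsilon>) * card J \<le> hits B J x}
      \<le> exp (-2 * \<epsilon>\<^sup>2 * card J)"
    and hits_Hoeffding_le: "measure (PiM I M) {x \<in> space (PiM I M). hits B J x \<le> (r - \<epsilon>) * card J}
      \<le> exp (-2 * \<epsilon>\<^sup>2 * card J)"
proof -
  have expectation: "P.expectation (\<lambda>x. indicator B (x i)) = r" if "i \<in> J" for i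
  proof -
    have "P.expectation (\<lambda>x. indicator B (x i))
        = integral\<^sup>L (distr (PiM I M) (M i) (\<lambda>x. x i)) (indicator B :: 'a \<Rightarrow> real)"
      using that assms(2) B by (intro integral_distr[symmetric]) auto
    also have "\<dots> = measure (M i) B"
      using that assms(2) B distr_PiM_component[of I M i] prob_space by (auto simp: subset_iff)
    finally show ?thesis using r that by simp
  qed
  interpret H: Hoeffding_ineq "PiM I M" J "\<lambda>i x. indicator B (x i)" "\<lambda>_. 0" "\<lambda>_. 1" "real (card J) * r"
  proof unfold_locales
    show "P.indep_vars (\<lambda>_. borel) (\<lambda>i x. indicator B (x i) :: real) J"
      using B by (intro P.indep_vars_compose2[OF indep_vars_PiM_coordinates])
        (auto simp: assms borel_measurable_indicator)
    show "real (card J) * r \<equiv> (\<Sum>i\<in>J. P.expectation (\<lambda>x. indicator B (x i)))"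
      using expectation by simp
  qed (auto simp: assms)
  have card: "(\<Sum>i\<in>J. (1 - 0 :: real)\<^sup>2) > 0"
    using assms by (simp add: card_gt_0_iff)
  have exponent: "-2 * (\<epsilon> * card J)\<^sup>2 / (\<Sum>i\<in>J. (1 - 0)\<^sup>2) = -2 * \<epsilon>\<^sup>2 * card J"
    using card by (simp add: power2_eq_square)
  have "0 \<le> \<epsilon> * card J"
    using \<open>0 \<le> \<epsilon>\<close> by simp
  from H.Hoeffding_ineq_ge[OF this card] H.Hoeffding_ineq_le[OF this card]
  show "measure (PiM I M) {x \<in> space (PiM I M). (r + \<epsilon>) * card J \<le> hits B J x}
      \<le> exp (-2 * \<epsilon>\<^sup>2 * card J)"
    and "measure (PiM I M) {x \<in> space (PiM I M). hits B J x \<le> (r - \<epsilon>) * card J}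
      \<le> exp (-2 * \<epsilon>\<^sup>2 * card J)"
    unfolding exponent by (simp_all add: hits_def algebra_simps)
qed

lemma prob_spaces_neq_imp_measure_less:
  assumes M: "prob_space M" and N: "prob_space N" and sets_eq: "sets M = sets N" and "M \<noteq> N"
  obtains A where "A \<in> sets M" and "measure M A < measure N A"
proof -
  interpret M: prob_space M by (fact M)
  interpret N: prob_space N by (fact N)
  have "\<exists>A\<in>sets M. measure M A \<noteq> measure N A"
  proof (rule ccontr)
    assume "\<not> ?thesis"
    then have "M = N"
      using sets_eq by (intro measure_eqI) (auto simp: M.emeasure_eq_measure N.emeasure_eq_measure)
    with \<open>M \<noteq> N\<close> show False ..
  qed
  then obtain A where A: "A \<in> sets M" and neq: "measure M A \<noteq> measure N A" ..
  have "space M = space N"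
    using sets_eq by (rule sets_eq_imp_space_eq)
  then have "measure M (space M - A) = 1 - measure M A" "measure N (space M - A) = 1 - measure N A"
    using A sets_eq M.prob_compl N.prob_compl by auto
  then show ?thesis
    using that[of A] that[of "space M - A"] A neq by (cases "measure M A < measure N A") auto
qed

lemma card_edges_in:
  assumes "finite S"
  shows "card (edges_in S) = card S choose 2"
proof -
  have "bij_betw (\<lambda>(i, j). {i, j}) (edges_in S) {T. T \<subseteq> S \<and> card T = 2}"
  proof (rule bij_betwI')
    fix x y assume "x \<in> edges_in S" "y \<in> edges_in S"
    then show "((\<lambda>(i, j). {i, j}) x = (\<lambda>(i, j). {i, j}) y) = (x = y)"
      by (cases x; cases y) (auto simp: edges_in_def doubleton_eq_iff)
  next
    fix x assume "x \<in> edges_in S"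
    then show "(\<lambda>(i, j). {i, j}) x \<in> {T. T \<subseteq> S \<and> card T = 2}"
      by (cases x) (auto simp: edges_in_def)
  next
    fix T assume "T \<in> {T. T \<subseteq> S \<and> card T = 2}"
    then obtain a b where "T = {a, b}" "a \<noteq> b" "a \<in> S" "b \<in> S"
      by (auto simp: card_2_iff)
    then show "\<exists>x\<in>edges_in S. T = (\<lambda>(i, j). {i, j}) x"
      by (intro bexI[of _ "(min a b, max a b)"]) (auto simp: edges_in_def min_def max_def)
  qed
  then have "card (edges_in S) = card {T. T \<subseteq> S \<and> card T = 2}"
    by (rule bij_betw_same_card)
  with n_subsets[OF assms] show ?thesis
    by simp
qed

lemma real_choose_two: "real (k choose 2) = real k * (real k - 1) / 2"
proof -
  have "even (k * (k - 1))"
    by auto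
  then have "2 * (k choose 2) = k * (k - 1)"
    by (simp add: choose_two)
  then have "2 * real (k choose 2) = real k * real (k - 1)"
    by (metis of_nat_mult of_nat_numeral)
  then show ?thesis
    by (cases k) simp_all
qed

lemma finite_edges: "finite (edges n)"
  by (rule finite_subset[of _ "{1..n} \<times> {1..n}"]) (auto simp: edges_def)

lemma finite_ksubsets: "finite (ksubsets n k)"
  by (rule finite_subset[of _ "Pow {1..n}"]) (auto simp: ksubsets_def)

lemma card_ksubsets: "card (ksubsets n k) = n choose k"
  unfolding ksubsets_def by (simp add: n_subsets)

lemma edges_in_ksubset:
  assumes "S \<in> ksubsets n k"
  shows "edges_in S \<subseteq> edges n" and "card (edges_in S) = k choose 2"
  using assms finite_subset[of S "{1..n}"]
  by (auto simp: ksubsets_def edges_in_def edges_def card_edges_in[symmetric])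

lemma binomial_exp_le_two_div:
  fixes \<delta> :: real
  assumes "0 < \<delta>" and "2 \<le> k" and "k \<le> n" and k_large: "4 / \<delta>\<^sup>2 * ln (real n) \<le> real k"
  shows "(real (n choose k) + 1) * exp (-2 * \<delta>\<^sup>2 * real (k choose 2)) \<le> 2 / real n"
proof -
  define L where "L = ln (real n)"
  have n: "real n > 0" and "L \<ge> 0"
    using assms(2,3) by (simp_all add: L_def)
  have "4 * L \<le> \<delta>\<^sup>2 * real k"
    using k_large \<open>0 < \<delta>\<close> by (simp add: L_def field_simps)
  then have "4 * L * (real k - 1) \<le> \<delta>\<^sup>2 * real k * (real k - 1)"
    using assms(2) by (intro mult_right_mono) auto
  moreover have "(real k + 1) * L \<le> (4 * (real k - 1)) * L"
    using assms(2) \<open>L \<ge> 0\<close> by (intro mult_right_mono) auto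
  ultimately have exponent: "real k * L - \<delta>\<^sup>2 * real k * (real k - 1) \<le> - L"
    by (simp add: algebra_simps)
  have "real (n choose k) + 1 \<le> 2 * real n ^ k"
  proof -
    have "real (n choose k) \<le> real n ^ k"
      using binomial_le_pow[OF assms(3)] by (metis of_nat_le_iff of_nat_power)
    moreover have "1 \<le> real n ^ k"
      using assms(2,3) by simp
    ultimately show ?thesis
      by linarith
  qed
  also have "real n ^ k = exp (real k * L)"
    using n by (simp add: L_def exp_of_nat_mult)
  finally have binomial: "real (n choose k) + 1 \<le> 2 * exp (real k * L)" .
  have "(real (n choose k) + 1) * exp (-2 * \<delta>\<^sup>2 * real (k choose 2))
      \<le> 2 * exp (real k * L) * exp (-2 * \<delta>\<^sup>2 * real (k choose 2))"
    by (rule mult_right_mono[OF binomial]) simp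
  also have "\<dots> = 2 * exp (real k * L - \<delta>\<^sup>2 * real k * (real k - 1))"
    by (simp add: real_choose_two mult.assoc flip: exp_add)
  also have "\<dots> \<le> 2 * exp (- L)"
    using exponent by simp
  also have "\<dots> = 2 / real n"
    using n by (simp add: L_def exp_minus field_simps)
  finally show ?thesis .
qed

lemma alt_prob_nonneg: "0 \<le> alt_prob n k P Q A"
  by (simp add: alt_prob_def sum_nonneg)

lemma alt_prob_le:
  assumes "k \<le> n" and "\<And>S. S \<in> ksubsets n k \<Longrightarrow> measure (planted_law n P Q S) A \<le> b"
  shows "alt_prob n k P Q A \<le> b"
proof -
  have "(\<Sum>S\<in>ksubsets n k. measure (planted_law n P Q S) A) \<le> real (card (ksubsets n k)) * b"
    using sum_mono[OF assms(2)] by simp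
  moreover have "card (ksubsets n k) > 0"
    using assms(1) by (simp add: card_ksubsets)
  ultimately show ?thesis
    by (simp add: alt_prob_def divide_le_eq mult.commute)
qed

lemma optimal_risk_le:
  assumes "A \<in> sets (obs_space n)"
  shows "optimal_risk n k P Q \<le> measure (null_law n P) A + alt_prob n k P Q (space (obs_space n) - A)"
  unfolding optimal_risk_def
  by (rule cINF_lower[OF bdd_belowI[of _ 0] assms]) (auto intro: add_nonneg_nonneg alt_prob_nonneg)

lemma optimal_risk_nonneg: "0 \<le> optimal_risk n k P Q"
  unfolding optimal_risk_def
  by (rule cINF_greatest) (auto intro: add_nonneg_nonneg alt_prob_nonneg)

lemma sets_PiM_edges:
  assumes "\<And>e. sets (F e) = sets borel"
  shows "sets (PiM (edges n) F) = sets (obs_space n)"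
  unfolding obs_space_def using assms by (intro sets_PiM_cong) auto

lemma
  assumes "\<And>e. prob_space (F e)" and F_sets: "\<And>e. sets (F e) = sets borel"
    and F_clique: "\<And>e. e \<in> edges_in S \<Longrightarrow> F e = R"
    and "B \<in> sets borel" and S: "S \<in> ksubsets n k" and "2 \<le> k" and "0 \<le> \<delta>"
  shows PiM_edges_hits_ge: "measure (PiM (edges n) F)
      {x \<in> space (obs_space n). (measure R B + \<delta>) * real (k choose 2) \<le> hits B (edges_in S) x}
    \<le> exp (-2 * \<delta>\<^sup>2 * real (k choose 2))"
    and PiM_edges_hits_le: "measure (PiM (edges n) F)
      {x \<in> space (obs_space n). hits B (edges_in S) x \<le> (measure R B - \<delta>) * real (k choose 2)}
    \<le> exp (-2 * \<delta>\<^sup>2 * real (k choose 2))"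
proof -
  interpret product_prob_space F "edges n"
    by (intro product_prob_spaceI assms)
  have E: "edges_in S \<subseteq> edges n" "card (edges_in S) = k choose 2"
    using edges_in_ksubset[OF S] by simp_all
  moreover have "edges_in S \<noteq> {}"
    using E(2) \<open>2 \<le> k\<close> by (intro notI) simp
  moreover from this have "sets R = sets borel"
    using F_clique F_sets by (metis all_not_in_conv)
  moreover have "space (obs_space n) = space (PiM (edges n) F)"
    using sets_eq_imp_space_eq[OF sets_PiM_edges[OF F_sets]] by simp
  ultimately show "measure (PiM (edges n) F)
      {x \<in> space (obs_space n). (measure R B + \<delta>) * real (k choose 2) \<le> hits B (edges_in S) x}
    \<le> exp (-2 * \<delta>\<^sup>2 * real (k choose 2))"
    and "measure (PiM (edges n) F)
      {x \<in> space (obs_space n). hits B (edges_in S) x \<le> (measure R B - \<delta>) * real (k choose 2)}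
    \<le> exp (-2 * \<delta>\<^sup>2 * real (k choose 2))"
    using hits_Hoeffding_ge[of "edges_in S" B "measure R B" \<delta>]
      hits_Hoeffding_le[of "edges_in S" B "measure R B" \<delta>]
      finite_subset[OF E(1) finite_edges] assms
    by simp_all
qed

definition scan_region :: "nat \<Rightarrow> nat \<Rightarrow> real set \<Rightarrow> real \<Rightarrow> ((nat \<times> nat) \<Rightarrow> real) set" where
  "scan_region n k B \<tau> = {x \<in> space (obs_space n). \<exists>S\<in>ksubsets n k. \<tau> \<le> hits B (edges_in S) x}"

lemma scan_region_eq_UN:
  "scan_region n k B \<tau> = (\<Union>S\<in>ksubsets n k. {x \<in> space (obs_space n). \<tau> \<le> hits B (edges_in S) x})"
  by (auto simp: scan_region_def)

lemma hits_le_set_in_sets: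
  assumes "B \<in> sets borel" and "S \<in> ksubsets n k"
  shows "{x \<in> space (obs_space n). \<tau> \<le> hits B (edges_in S) x} \<in> sets (obs_space n)"
    and "{x \<in> space (obs_space n). hits B (edges_in S) x \<le> \<tau>} \<in> sets (obs_space n)"
  using edges_in_ksubset(1)[OF assms(2)] assms(1) unfolding obs_space_def by measurable

lemma scan_region_in_sets:
  assumes "B \<in> sets borel"
  shows "scan_region n k B \<tau> \<in> sets (obs_space n)"
  unfolding scan_region_eq_UN using assms finite_ksubsets hits_le_set_in_sets(1) by blast

lemma null_law_scan_region:
  assumes "prob_space P" and "sets P = sets borel" and "B \<in> sets borel" and "2 \<le> k" and "0 \<le> \<delta>"
  shows "measure (null_law n P) (scan_region n k B ((measure P B + \<delta>) * real (k choose 2)))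
    \<le> real (n choose k) * exp (-2 * \<delta>\<^sup>2 * real (k choose 2))"
proof -
  interpret prob_space "PiM (edges n) (\<lambda>_. P)"
    using assms(1) by (rule prob_space_PiM)
  let ?U = "\<lambda>S. {x \<in> space (obs_space n).
    (measure P B + \<delta>) * real (k choose 2) \<le> hits B (edges_in S) x}"
  have "measure (PiM (edges n) (\<lambda>_. P)) (\<Union>S\<in>ksubsets n k. ?U S)
      \<le> (\<Sum>S\<in>ksubsets n k. measure (PiM (edges n) (\<lambda>_. P)) (?U S))"
    using finite_ksubsets hits_le_set_in_sets(1)[OF assms(3)] sets_PiM_edges[of "\<lambda>_. P"] assms(2)
    by (intro finite_measure_subadditive_finite) auto
  also have "\<dots> \<le> (\<Sum>S\<in>ksubsets n k. exp (-2 * \<delta>\<^sup>2 * real (k choose 2)))"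
    using PiM_edges_hits_ge[of "\<lambda>_. P" _ P] assms by (intro sum_mono) auto
  finally show ?thesis
    by (simp add: null_law_def scan_region_eq_UN card_ksubsets)
qed

lemma planted_law_compl_scan_region:
  assumes "prob_space P" and "sets P = sets borel" and "prob_space Q" and "sets Q = sets borel"
    and "B \<in> sets borel" and S: "S \<in> ksubsets n k" and "2 \<le> k" and "0 \<le> \<delta>"
  shows "measure (planted_law n P Q S)
      (space (obs_space n) - scan_region n k B ((measure Q B - \<delta>) * real (k choose 2)))
    \<le> exp (-2 * \<delta>\<^sup>2 * real (k choose 2))"
proof -
  define F where "F = (\<lambda>e. if e \<in> edges_in S then Q else P)"
  have F: "\<And>e. prob_space (F e)" "\<And>e. sets (F e) = sets borel"
    using assms(1-4) by (simp_all add: F_def)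
  interpret prob_space "PiM (edges n) F"
    using F(1) by (rule prob_space_PiM)
  have "space (obs_space n) - scan_region n k B ((measure Q B - \<delta>) * real (k choose 2))
      \<subseteq> {x \<in> space (obs_space n). hits B (edges_in S) x \<le> (measure Q B - \<delta>) * real (k choose 2)}"
    using S by (auto simp: scan_region_def not_le intro: less_imp_le)
  then have "measure (PiM (edges n) F)
      (space (obs_space n) - scan_region n k B ((measure Q B - \<delta>) * real (k choose 2)))
    \<le> measure (PiM (edges n) F)
      {x \<in> space (obs_space n). hits B (edges_in S) x \<le> (measure Q B - \<delta>) * real (k choose 2)}"
    using hits_le_set_in_sets(2)[OF assms(5) S] sets_PiM_edges[OF F(2)]
    by (intro finite_measure_mono) auto
  also have "\<dots> \<le> exp (-2 * \<delta>\<^sup>2 * real (k choose 2))"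
    using F assms(5-8) by (intro PiM_edges_hits_le) (auto simp: F_def)
  finally show ?thesis
    by (simp add: planted_law_def F_def)
qed

lemma optimal_risk_le_exp:
  assumes "prob_space P" and "sets P = sets borel" and "prob_space Q" and "sets Q = sets borel"
    and "B \<in> sets borel" and "measure P B \<le> measure Q B" and "2 \<le> k" and "k \<le> n"
  shows "optimal_risk n k P Q
    \<le> (real (n choose k) + 1) * exp (-2 * ((measure Q B - measure P B) / 2)\<^sup>2 * real (k choose 2))"
proof -
  define \<delta> where "\<delta> = (measure Q B - measure P B) / 2"
  define \<tau> where "\<tau> = (measure P B + \<delta>) * real (k choose 2)"
  have "0 \<le> \<delta>"
    using assms(6) by (simp add: \<delta>_def)
  have \<tau>_eq: "\<tau> = (measure Q B - \<delta>) * real (k choose 2)"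
    by (simp add: \<tau>_def \<delta>_def field_simps)
  have null: "measure (null_law n P) (scan_region n k B \<tau>)
      \<le> real (n choose k) * exp (-2 * \<delta>\<^sup>2 * real (k choose 2))"
    unfolding \<tau>_def by (rule null_law_scan_region[OF assms(1,2,5,7) \<open>0 \<le> \<delta>\<close>])
  have alt: "alt_prob n k P Q (space (obs_space n) - scan_region n k B \<tau>)
      \<le> exp (-2 * \<delta>\<^sup>2 * real (k choose 2))"
    unfolding \<tau>_eq
    by (intro alt_prob_le[OF assms(8)] planted_law_compl_scan_region[OF assms(1-5) _ assms(7) \<open>0 \<le> \<delta>\<close>])
  have "optimal_risk n k P Q
      \<le> measure (null_law n P) (scan_region n k B \<tau>)
        + alt_prob n k P Q (space (obs_space n) - scan_region n k B \<tau>)"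
    by (rule optimal_risk_le[OF scan_region_in_sets[OF assms(5)]])
  also have "\<dots> \<le> (real (n choose k) + 1) * exp (-2 * \<delta>\<^sup>2 * real (k choose 2))"
    using null alt by (simp add: distrib_right)
  finally show ?thesis
    by (simp add: \<delta>_def)
qed

theorem mainTheorem5:
  fixes P Q :: "real measure"
  assumes "prob_space P" and "sets P = sets borel"
    and "prob_space Q" and "sets Q = sets borel"
    and "P \<noteq> Q"
  shows "\<exists>c>0. \<forall>k :: nat \<Rightarrow> nat.
           (\<forall>n\<ge>2. 2 \<le> k n \<and> k n \<le> n) \<longrightarrow>
           (\<forall>\<^sub>F n in sequentially. c * ln (real n) \<le> real (k n)) \<longrightarrow>
           (\<lambda>n. optimal_risk n (k n) P Q) \<longlonglongrightarrow> 0"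
proof -
  obtain B where B: "B \<in> sets borel" and less: "measure P B < measure Q B"
    using prob_spaces_neq_imp_measure_less[OF assms(1,3)] assms(2,4,5) by auto
  define \<delta> where "\<delta> = (measure Q B - measure P B) / 2"
  have "\<delta> > 0"
    using less by (simp add: \<delta>_def)
  show ?thesis
  proof (intro exI[of _ "4 / \<delta>\<^sup>2"] conjI allI impI)
    fix k :: "nat \<Rightarrow> nat"
    assume k_range: "\<forall>n\<ge>2. 2 \<le> k n \<and> k n \<le> n"
      and k_large: "\<forall>\<^sub>F n in sequentially. 4 / \<delta>\<^sup>2 * ln (real n) \<le> real (k n)"
    have bound: "\<forall>\<^sub>F n in sequentially. optimal_risk n (k n) P Q \<le> 2 / real n"
      using k_large eventually_ge_at_top[of 2]
    proof eventually_elim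
      case (elim n)
      with k_range have k: "2 \<le> k n" "k n \<le> n"
        by auto
      have "optimal_risk n (k n) P Q
          \<le> (real (n choose k n) + 1) * exp (-2 * \<delta>\<^sup>2 * real (k n choose 2))"
        using optimal_risk_le_exp[OF assms(1-4) B less_imp_le[OF less] k] by (simp add: \<delta>_def)
      also have "\<dots> \<le> 2 / real n"
        using binomial_exp_le_two_div[OF \<open>\<delta> > 0\<close> k] elim by simp
      finally show ?case .
    qed
    show "(\<lambda>n. optimal_risk n (k n) P Q) \<longlonglongrightarrow> 0"
      by (rule real_tendsto_sandwich[OF _ bound tendsto_const lim_const_over_n])
        (simp add: optimal_risk_nonneg)
  qed (use \<open>\<delta> > 0\<close> in simp)
qed

end
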